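(* Let $p\in[1,\infty]$ and for $\lambda\in\mathbb{R}$ define operators on $L^p(0,1)$ by $(S_\lambda f)(t)=\int_0^1 e^{\lambda(t-s)}f(s)\,ds$ and $(T_\lambda f)(t)=\int_0^t e^{\lambda(t-s)}f(s)\,ds$. Then $S_\lambda\sim T_\lambda$ as $\lambda\to\infty$ through $\mathbb{R}^+$, i.e. $\|S_\lambda-T_\lambda\|_p/\|S_\lambda\|_p\to 0$. In particular $\|T_\lambda\|_p\sim C_p e^\lambda/\lambda$.
   Context: $C_p=1/(p^{1/p}q^{1/q})$ if $1<p<\infty$ where $1/p+1/q=1$, and $C_p=1$ if $p=1$ or $p=\infty$. $\|\cdot\|_p$ denotes the operator norm on $L^p(0,1)$. For operator sequences, $A_\lambda\sim B_\lambda$ means $\|A_\lambda-B_\lambda\|/\|A_\lambda\|\to0$; for numbers, $a_\lambda\sim b_\lambda$ means $a_\lambda/b_\lambda\to 1$. *)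

theory Defs
  imports "HOL-Probability.Essential_Supremum" "HOL-Library.Landau_Symbols"
begin

abbreviation I01 :: "real measure" where
  "I01 \<equiv> lebesgue_on {0<..<1}"

definition Lp_norm :: "ereal \<Rightarrow> (real \<Rightarrow> real) \<Rightarrow> ereal" where
  "Lp_norm p f =
     (if p = \<infinity> then esssup I01 (\<lambda>x. ereal \<bar>f x\<bar>)
      else (let J = (\<integral>\<^sup>+ x. ennreal (\<bar>f x\<bar> powr real_of_ereal p) \<partial>I01)
            in if J = \<infinity> then \<infinity> else ereal (enn2real J powr (1 / real_of_ereal p))))"

definition op_norm :: "ereal \<Rightarrow> ((real \<Rightarrow> real) \<Rightarrow> (real \<Rightarrow> real)) \<Rightarrow> ereal" where
  "op_norm p K = Sup {Lp_norm p (K f) | f. f \<in> borel_measurable I01 \<and> Lp_norm p f \<le> 1}"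

definition S_op :: "real \<Rightarrow> (real \<Rightarrow> real) \<Rightarrow> (real \<Rightarrow> real)" where
  "S_op l f = (\<lambda>t. \<integral> s. exp (l * (t - s)) * f s \<partial>I01)"

definition T_op :: "real \<Rightarrow> (real \<Rightarrow> real) \<Rightarrow> (real \<Rightarrow> real)" where
  "T_op l f = (\<lambda>t. \<integral> s. indicator {..<t} s * exp (l * (t - s)) * f s \<partial>I01)"

definition C_const :: "ereal \<Rightarrow> real" where
  "C_const p = (if p = 1 \<or> p = \<infinity> then 1
     else (let r = real_of_ereal p; q = r / (r - 1)
           in 1 / (r powr (1 / r) * q powr (1 / q))))"

end

theory Submission
  imports Defs "HOL-Real_Asymp.Real_Asymp"
begin

(* For ||f||_p <= 1, Hoelder's inequality bounds int e^(-l s) |f s| ds by ||e^(-l .)||_q, so |S f t| and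
   |T f t| are at most e^(l t) ||e^(-l .)||_q, and both operator norms are at most
   ||e^(-l .)||_q ||e^(l .)||_p <= C_p e^l / l.  The difference (S - T) f t = int_t^1 e^(l (t - s)) f s ds
   has a kernel bounded by 1, hence ||S - T||_p <= ||f||_1 <= 1.
   Conversely, for the near-extremals f = c e^(-nu s) of Hoelder's inequality (nu = l / (p - 1) if
   1 < p < infinity, the spike nu = l^2 if p = 1, the constant 1 if p = infinity), both S f and T f
   dominate c (1 - e^(-(l + nu) / 2)) / (l + nu) e^(l t) on (1/2, 1), which gives the lower bound
   C_p e^l / l (1 - o(1)) for both norms. *)

section \<open>Exponential integrals on (0,1)\<close>

lemma measurable_id_I01 [measurable]: "(\<lambda>x::real. x) \<in> borel_measurable I01"
  by (intro continuous_imp_measurable_on_sets_lebesgue continuous_intros) auto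

lemma emeasure_I01_interval:
  assumes "0 \<le> a" "a \<le> 1"
  shows "emeasure I01 {a<..<1} = ennreal (1 - a)"
  using assms by (subst emeasure_restrict_space) (auto simp: Int_absorb2)

lemma emeasure_I01_space: "emeasure I01 (space I01) = 1"
  using emeasure_I01_interval[of 0] by simp

lemma nn_integral_indicator_exp:
  assumes "0 \<le> a" "a \<le> b" "b \<le> 1" "c \<noteq> 0"
  shows "(\<integral>\<^sup>+ t. ennreal (indicator {a<..<b} t * exp (c * t)) \<partial>I01)
           = ennreal ((exp (c * b) - exp (c * a)) / c)"
proof -
  have "((\<lambda>t. exp (c * t)) has_integral (exp (c * b) / c - exp (c * a) / c)) {a..b}"
    using assms(2,4)
    by (intro fundamental_theorem_of_calculus)
       (auto intro!: derivative_eq_intros simp: has_real_derivative_iff_has_vector_derivative[symmetric])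
  then have has_integral: "((\<lambda>t. exp (c * t)) has_integral ((exp (c * b) - exp (c * a)) / c)) {a<..<b}"
    using has_integral_open_interval[of "\<lambda>t. exp (c * t)" _ a b] by (simp add: diff_divide_distrib)
  have "(\<integral>\<^sup>+ t. ennreal (indicator {a<..<b} t * exp (c * t)) \<partial>I01)
      = (\<integral>\<^sup>+ t. ennreal (indicator {a<..<b} t * exp (c * t)) * indicator {0<..<1} t \<partial>completion lborel)"
    by (subst nn_integral_restrict_space) auto
  also have "\<dots> = (\<integral>\<^sup>+ t. ennreal (exp (c * t)) * indicator {a<..<b} t \<partial>lborel)"
    unfolding nn_integral_completion
    by (intro nn_integral_cong) (use assms in \<open>auto simp: indicator_def\<close>)
  also have "\<dots> = ennreal ((exp (c * b) - exp (c * a)) / c)"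
    by (rule nn_integral_has_integral_lebesgue'[OF _ has_integral]) auto
  finally show ?thesis .
qed

lemma nn_integral_exp_I01:
  assumes "c \<noteq> 0"
  shows "(\<integral>\<^sup>+ t. ennreal (exp (c * t)) \<partial>I01) = ennreal ((exp c - 1) / c)"
proof -
  have "(\<integral>\<^sup>+ t. ennreal (exp (c * t)) \<partial>I01) = (\<integral>\<^sup>+ t. ennreal (indicator {0<..<1} t * exp (c * t)) \<partial>I01)"
    by (intro nn_integral_cong) auto
  then show ?thesis
    using nn_integral_indicator_exp[of 0 1 c] assms by simp
qed

lemma nn_integral_exp_neg_I01:
  assumes "c \<noteq> 0"
  shows "(\<integral>\<^sup>+ t. ennreal (exp (- c * t)) \<partial>I01) = ennreal ((1 - exp (- c)) / c)"
proof -
  have "(exp (- c) - 1) / - c = (1 - exp (- c)) / c"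
    using assms by (simp add: field_simps)
  then show ?thesis
    using nn_integral_exp_I01[of "- c"] assms by simp
qed

lemma integral_indicator_exp_neg:
  assumes "0 < t" "t \<le> 1" "m > 0"
  shows "(\<integral>s. indicator {0<..<t} s * exp (- m * s) \<partial>I01) = (1 - exp (- m * t)) / m"
proof -
  have "(\<integral>s. indicator {0<..<t} s * exp (- m * s) \<partial>I01)
      = enn2real (\<integral>\<^sup>+ s. ennreal (indicator {0<..<t} s * exp (- m * s)) \<partial>I01)"
    by (rule integral_eq_nn_integral) (auto intro!: AE_I2)
  moreover have "(exp (- m * t) - exp (- m * 0)) / - m = (1 - exp (- m * t)) / m"
    using assms by (simp add: field_simps)
  moreover have "0 \<le> (1 - exp (- m * t)) / m"
    using assms by simp
  ultimately show ?thesis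
    using assms nn_integral_indicator_exp[of 0 t "- m"] by simp
qed

lemma powr_mult_exp:
  fixes c m t r :: real
  assumes "0 \<le> c"
  shows "(c * exp (m * t)) powr r = c powr r * exp (r * m * t)"
  using assms by (simp add: powr_mult exp_powr_real mult_ac)

section \<open>Conjugate exponents and Hoelder's inequality\<close>

lemma ereal_ge_one_cases:
  assumes "1 \<le> p"
  obtains (infinity) "p = \<infinity>" | (one) "p = 1" | (conjugate) r where "p = ereal r" "r > 1"
  using assms by (cases p) (auto simp: one_ereal_def le_less)

lemma conjugate_exponent:
  fixes r :: real
  assumes "r > 1"
  shows "r / (r - 1) > 1" "1 / r + 1 / (r / (r - 1)) = 1"
  using assms by (simp_all add: field_simps)

lemma Holder_inequality_nn_integral:
  fixes f h :: "'a \<Rightarrow> real"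
  assumes r: "r > 1" and q: "q > 1" and rq: "1 / r + 1 / q = 1" and G: "G > 0"
    and [measurable]: "f \<in> borel_measurable M" "h \<in> borel_measurable M"
    and h_nonneg: "\<And>x. 0 \<le> h x"
    and f_norm: "(\<integral>\<^sup>+ x. ennreal (\<bar>f x\<bar> powr r) \<partial>M) \<le> 1"
    and h_norm: "(\<integral>\<^sup>+ x. ennreal (h x powr q) \<partial>M) \<le> ennreal (G powr q)"
  shows "(\<integral>\<^sup>+ x. ennreal (h x * \<bar>f x\<bar>) \<partial>M) \<le> ennreal G"
proof -
  define D where "D = G powr (1 - q) / q"
  have D: "0 < D" using G q by (simp add: D_def)
  have Young: "h x * \<bar>f x\<bar> \<le> G / r * \<bar>f x\<bar> powr r + D * h x powr q" for x
  proof -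
    have "h x * \<bar>f x\<bar> = G * (\<bar>f x\<bar> * (h x / G))" using G by simp
    also have "\<dots> \<le> G * (\<bar>f x\<bar> powr r / r + (h x / G) powr q / q)"
      using Youngs_inequality[OF r q rq, of "\<bar>f x\<bar>" "h x / G"] G h_nonneg[of x]
      by (intro mult_left_mono) auto
    also have "\<dots> = G / r * \<bar>f x\<bar> powr r + D * h x powr q"
      using G h_nonneg[of x] by (simp add: D_def powr_divide powr_diff field_simps)
    finally show ?thesis .
  qed
  have "(\<integral>\<^sup>+ x. ennreal (h x * \<bar>f x\<bar>) \<partial>M)
      \<le> (\<integral>\<^sup>+ x. ennreal (G / r) * ennreal (\<bar>f x\<bar> powr r) + ennreal D * ennreal (h x powr q) \<partial>M)"
    using Young G r D by (intro nn_integral_mono) (simp flip: ennreal_mult ennreal_plus add: ennreal_leI)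
  also have "\<dots> = ennreal (G / r) * (\<integral>\<^sup>+ x. ennreal (\<bar>f x\<bar> powr r) \<partial>M)
      + ennreal D * (\<integral>\<^sup>+ x. ennreal (h x powr q) \<partial>M)"
    by (simp add: nn_integral_add nn_integral_cmult)
  also have "\<dots> \<le> ennreal (G / r) * 1 + ennreal D * ennreal (G powr q)"
    using f_norm h_norm by (intro add_mono mult_left_mono) auto
  also have "\<dots> = ennreal (G / r + G / q)"
  proof -
    have "D * G powr q = G / q"
      using G by (simp add: D_def powr_diff)
    then show ?thesis
      using G r q D by (simp flip: ennreal_mult ennreal_plus)
  qed
  also have "\<dots> = ennreal (G * (1 / r + 1 / q))"
    by (simp add: field_simps)
  finally show ?thesis
    using rq by simp
qed

section \<open>\<open>L\<^sup>p\<close> norms on (0,1)\<close>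

lemma Lp_norm_ereal_eq:
  assumes "(\<integral>\<^sup>+ x. ennreal (\<bar>g x\<bar> powr r) \<partial>I01) = ennreal j" "0 \<le> j"
  shows "Lp_norm (ereal r) g = ereal (j powr (1 / r))"
  using assms by (simp add: Lp_norm_def)

lemma Lp_norm_ereal_le_iff:
  assumes "r > 0" "0 \<le> B"
  shows "Lp_norm (ereal r) g \<le> ereal B \<longleftrightarrow>
           (\<integral>\<^sup>+ x. ennreal (\<bar>g x\<bar> powr r) \<partial>I01) \<le> ennreal (B powr r)"
proof (cases "\<integral>\<^sup>+ x. ennreal (\<bar>g x\<bar> powr r) \<partial>I01")
  case (real j)
  have "j powr (1 / r) \<le> B \<longleftrightarrow> j \<le> B powr r"
  proof
    assume "j powr (1 / r) \<le> B"
    then have "(j powr (1 / r)) powr r \<le> B powr r"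
      using assms real by (intro powr_mono2) auto
    then show "j \<le> B powr r"
      using assms real by (simp add: powr_powr)
  next
    assume "j \<le> B powr r"
    then have "j powr (1 / r) \<le> (B powr r) powr (1 / r)"
      using assms real by (intro powr_mono2) auto
    then show "j powr (1 / r) \<le> B"
      using assms by (simp add: powr_powr)
  qed
  then show ?thesis
    using assms real by (simp add: Lp_norm_ereal_eq)
qed (simp add: Lp_norm_def top_unique)

lemma Lp_norm_infinity_le_iff:
  assumes [measurable]: "g \<in> borel_measurable I01"
  shows "Lp_norm \<infinity> g \<le> ereal B \<longleftrightarrow> (AE x in I01. \<bar>g x\<bar> \<le> B)"
proof
  assume "Lp_norm \<infinity> g \<le> ereal B"
  then show "AE x in I01. \<bar>g x\<bar> \<le> B"
    using esssup_AE[of "\<lambda>x. ereal \<bar>g x\<bar>" I01]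
    by (auto simp: Lp_norm_def elim!: eventually_mono dest: order_trans)
next
  assume "AE x in I01. \<bar>g x\<bar> \<le> B"
  then show "Lp_norm \<infinity> g \<le> ereal B"
    by (auto simp: Lp_norm_def intro!: esssup_I elim!: eventually_mono)
qed

lemma Lp_norm_infinity_ge:
  assumes "0 \<le> b" "b < 1" and ge: "\<And>t. b < t \<Longrightarrow> t < 1 \<Longrightarrow> B \<le> \<bar>g t\<bar>"
  shows "ereal B \<le> Lp_norm \<infinity> g"
proof (rule ccontr)
  assume "\<not> ereal B \<le> Lp_norm \<infinity> g"
  then have less: "esssup I01 (\<lambda>x. ereal \<bar>g x\<bar>) < ereal B"
    by (simp add: Lp_norm_def)
  have "AE x in I01. x \<notin> {b<..<1}"
    using esssup_AE[of "\<lambda>x. ereal \<bar>g x\<bar>" I01]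
  proof eventually_elim
    case (elim x)
    then have "\<bar>g x\<bar> < B"
      using le_less_trans[OF elim less] by simp
    then show ?case
      using ge by force
  qed
  moreover have "{b<..<1} \<in> sets I01"
    using assms by (subst sets_restrict_space_iff) auto
  ultimately have "{b<..<1} \<in> null_sets I01"
    by (subst AE_iff_null_sets) auto
  then show False
    using assms emeasure_I01_interval[of b] by (simp add: null_sets_def)
qed

lemma Lp_norm_nonneg: "0 \<le> Lp_norm p g"
proof (cases "p = \<infinity>")
  case True
  have "ereal 0 \<le> Lp_norm \<infinity> g"
    by (rule Lp_norm_infinity_ge[of 0]) auto
  then show ?thesis
    using True by (simp add: zero_ereal_def)
qed (simp add: Lp_norm_def Let_def)

lemma Lp_norm_mono:
  assumes "1 \<le> p" and [measurable]: "g \<in> borel_measurable I01"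
    and le: "\<And>t. t \<in> {0<..<1} \<Longrightarrow> \<bar>g t\<bar> \<le> \<bar>h t\<bar>"
  shows "Lp_norm p g \<le> Lp_norm p h"
proof (cases p)
  case PInf
  have "esssup I01 (\<lambda>x. ereal \<bar>g x\<bar>) \<le> esssup I01 (\<lambda>x. ereal \<bar>h x\<bar>)"
    using le by (intro esssup_AE_mono AE_I2) auto
  then show ?thesis
    using PInf by (simp add: Lp_norm_def)
next
  case (real r)
  then have r: "r \<ge> 1"
    using assms(1) by simp
  have J: "(\<integral>\<^sup>+ x. ennreal (\<bar>g x\<bar> powr r) \<partial>I01) \<le> (\<integral>\<^sup>+ x. ennreal (\<bar>h x\<bar> powr r) \<partial>I01)"
    using le r by (intro nn_integral_mono ennreal_leI powr_mono2) auto
  show ?thesis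
  proof (cases "\<integral>\<^sup>+ x. ennreal (\<bar>h x\<bar> powr r) \<partial>I01")
    case (real j)
    with J obtain i where "(\<integral>\<^sup>+ x. ennreal (\<bar>g x\<bar> powr r) \<partial>I01) = ennreal i" "0 \<le> i" "i \<le> j"
      by (cases "\<integral>\<^sup>+ x. ennreal (\<bar>g x\<bar> powr r) \<partial>I01") (auto simp: top_unique)
    with real r show ?thesis
      by (simp add: \<open>p = ereal r\<close> Lp_norm_ereal_eq powr_mono2)
  qed (simp add: Lp_norm_def \<open>p = ereal r\<close>)
qed (use assms(1) in simp)

lemma Lp_norm_const:
  assumes "1 \<le> p"
  shows "Lp_norm p (\<lambda>_. c) = ereal \<bar>c\<bar>"
proof (cases p)
  case PInf
  then show ?thesis
    using esssup_const[of I01 "ereal \<bar>c\<bar>"] emeasure_I01_space by (simp add: Lp_norm_def)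
next
  case (real r)
  have "(\<integral>\<^sup>+ x. ennreal (\<bar>c\<bar> powr r) \<partial>I01) = ennreal (\<bar>c\<bar> powr r)"
    using emeasure_I01_space by simp
  then show ?thesis
    using real assms by (simp add: Lp_norm_ereal_eq powr_powr)
qed (use assms in simp)

lemma op_norm_le:
  assumes "\<And>f. f \<in> borel_measurable I01 \<Longrightarrow> Lp_norm p f \<le> 1 \<Longrightarrow> Lp_norm p (A f) \<le> B"
  shows "op_norm p A \<le> B"
  unfolding op_norm_def using assms by (auto intro!: Sup_least)

lemma Lp_norm_le_op_norm:
  assumes "f \<in> borel_measurable I01" "Lp_norm p f \<le> 1"
  shows "Lp_norm p (A f) \<le> op_norm p A"
  unfolding op_norm_def using assms by (auto intro!: Sup_upper)

lemma op_norm_nonneg: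
  assumes "1 \<le> p"
  shows "0 \<le> op_norm p A"
proof -
  have "Lp_norm p (A (\<lambda>_. 0)) \<le> op_norm p A"
    by (rule Lp_norm_le_op_norm) (simp_all add: Lp_norm_const[OF assms])
  then show ?thesis
    using Lp_norm_nonneg order_trans by blast
qed

section \<open>Upper bounds\<close>

(* Upper bounds for the L^p norm of t \<mapsto> e^(l t) and the L^q norm of s \<mapsto> e^(-l s), 1/p + 1/q = 1. *)

definition exp_Lp_bound :: "ereal \<Rightarrow> real \<Rightarrow> real" where
  "exp_Lp_bound p l = (if p = \<infinity> then exp l
     else (let r = real_of_ereal p in (exp (r * l) / (r * l)) powr (1 / r)))"

definition exp_dual_bound :: "ereal \<Rightarrow> real \<Rightarrow> real" where
  "exp_dual_bound p l = (if p = \<infinity> then 1 / l else if p = 1 then 1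
     else (let r = real_of_ereal p; q = r / (r - 1) in (q * l) powr (- 1 / q)))"

lemma exp_dual_bound_pos:
  assumes "1 \<le> p" "l > 0"
  shows "exp_dual_bound p l > 0"
  using assms by (cases rule: ereal_ge_one_cases) (auto simp: exp_dual_bound_def)

lemma exp_dual_bound_mult_exp_Lp_bound:
  assumes "1 \<le> p" and l: "l > 0"
  shows "exp_dual_bound p l * exp_Lp_bound p l = C_const p * exp l / l"
  using assms(1)
proof (cases rule: ereal_ge_one_cases)
  case (conjugate r)
  define q where "q = r / (r - 1)"
  have q: "q > 1" and rq: "1 / r + 1 / q = 1"
    using conjugate_exponent[OF \<open>r > 1\<close>] by (simp_all add: q_def)
  have "exp_Lp_bound p l = exp (r * l) powr (1 / r) / (r powr (1 / r) * l powr (1 / r))"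
    using conjugate l by (simp add: exp_Lp_bound_def powr_divide powr_mult)
  also have "exp (r * l) powr (1 / r) = exp l"
    using conjugate by (simp add: exp_powr_real)
  finally have E: "exp_Lp_bound p l = exp l / (r powr (1 / r) * l powr (1 / r))" .
  have K: "exp_dual_bound p l = 1 / (q powr (1 / q) * l powr (1 / q))"
    using conjugate q l by (simp add: exp_dual_bound_def q_def powr_minus_divide powr_mult)
  have C: "C_const p = 1 / (r powr (1 / r) * q powr (1 / q))"
    using conjugate by (simp add: C_const_def q_def)
  have L: "l powr (1 / r) * l powr (1 / q) = l"
    using l rq by (simp flip: powr_add)
  have "exp_dual_bound p l * exp_Lp_bound p l
      = exp l / (r powr (1 / r) * q powr (1 / q) * (l powr (1 / r) * l powr (1 / q)))"
    unfolding E K by (simp add: mult_ac)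
  then show ?thesis
    unfolding L C by simp
qed (use l in \<open>simp_all add: exp_Lp_bound_def exp_dual_bound_def C_const_def\<close>)

lemma Lp_norm_exp_le:
  assumes "1 \<le> p" "l > 0" "0 \<le> c"
  shows "Lp_norm p (\<lambda>t. c * exp (l * t)) \<le> ereal (c * exp_Lp_bound p l)"
proof (cases p)
  case PInf
  have "AE t in I01. \<bar>c * exp (l * t)\<bar> \<le> c * exp l"
    using assms by (intro AE_I2) (auto intro: mult_left_mono)
  then show ?thesis
    using PInf by (simp add: Lp_norm_infinity_le_iff exp_Lp_bound_def)
next
  case (real r)
  with assms have r: "r \<ge> 1"
    by simp
  have "(\<integral>\<^sup>+ t. ennreal (\<bar>c * exp (l * t)\<bar> powr r) \<partial>I01)
      = (\<integral>\<^sup>+ t. ennreal (c powr r) * ennreal (exp ((r * l) * t)) \<partial>I01)"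
    using assms by (intro nn_integral_cong) (simp add: powr_mult_exp ennreal_mult)
  also have "\<dots> = ennreal (c powr r) * ennreal ((exp (r * l) - 1) / (r * l))"
    using assms r by (simp add: nn_integral_cmult nn_integral_exp_I01)
  also have "\<dots> = ennreal (c powr r * ((exp (r * l) - 1) / (r * l)))"
    using assms r by (intro ennreal_mult[symmetric]) auto
  also have "\<dots> \<le> ennreal ((c * exp_Lp_bound p l) powr r)"
    using assms r real
    by (intro ennreal_leI)
       (simp add: exp_Lp_bound_def powr_mult powr_powr mult_left_mono divide_right_mono)
  finally show ?thesis
    using assms r real by (simp add: Lp_norm_ereal_le_iff exp_Lp_bound_def)
qed (use assms in simp)

lemma nn_integral_exp_abs_le_Holder:
  assumes r: "r > 1" and q: "q > 1" and rq: "1 / r + 1 / q = 1" and l: "l > 0"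
    and [measurable]: "f \<in> borel_measurable I01"
    and f_norm: "(\<integral>\<^sup>+ s. ennreal (\<bar>f s\<bar> powr r) \<partial>I01) \<le> 1"
  shows "(\<integral>\<^sup>+ s. ennreal (exp (- l * s) * \<bar>f s\<bar>) \<partial>I01) \<le> ennreal ((q * l) powr (- 1 / q))"
proof (rule Holder_inequality_nn_integral[OF r q rq _ _ _ _ f_norm])
  have "(\<integral>\<^sup>+ s. ennreal (exp (- l * s) powr q) \<partial>I01) = ennreal ((1 - exp (- (q * l))) / (q * l))"
    using q l nn_integral_exp_neg_I01[of "q * l"] by (simp add: exp_powr_real mult_ac)
  also have "\<dots> \<le> ennreal (1 / (q * l))"
    using q l by (intro ennreal_leI divide_right_mono) auto
  also have "1 / (q * l) = ((q * l) powr (- 1 / q)) powr q"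
    unfolding powr_powr using q l by (simp add: powr_minus_divide)
  finally show "(\<integral>\<^sup>+ s. ennreal (exp (- l * s) powr q) \<partial>I01) \<le> ennreal (((q * l) powr (- 1 / q)) powr q)" .
qed (use q l in auto)

lemma nn_integral_exp_abs_le_exp_dual_bound:
  assumes "1 \<le> p" "l > 0" and [measurable]: "f \<in> borel_measurable I01" and "Lp_norm p f \<le> 1"
  shows "(\<integral>\<^sup>+ s. ennreal (exp (- l * s) * \<bar>f s\<bar>) \<partial>I01) \<le> ennreal (exp_dual_bound p l)"
  using assms(1)
proof (cases rule: ereal_ge_one_cases)
  case infinity
  then have "AE s in I01. \<bar>f s\<bar> \<le> 1"
    using assms Lp_norm_infinity_le_iff[of f 1, folded one_ereal_def] by simp
  then have "(\<integral>\<^sup>+ s. ennreal (exp (- l * s) * \<bar>f s\<bar>) \<partial>I01) \<le> (\<integral>\<^sup>+ s. ennreal (exp ((- l) * s)) \<partial>I01)"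
    by (intro nn_integral_mono_AE) (auto elim!: eventually_mono intro!: ennreal_leI mult_left_le)
  also have "\<dots> = ennreal ((1 - exp (- l)) / l)"
    using assms nn_integral_exp_neg_I01[of l] by simp
  also have "\<dots> \<le> ennreal (exp_dual_bound p l)"
    using infinity assms by (intro ennreal_leI) (simp add: exp_dual_bound_def divide_right_mono)
  finally show ?thesis .
next
  case one
  then have "(\<integral>\<^sup>+ s. ennreal \<bar>f s\<bar> \<partial>I01) \<le> 1"
    using assms Lp_norm_ereal_le_iff[of 1 1 f, folded one_ereal_def] by simp
  moreover have "(\<integral>\<^sup>+ s. ennreal (exp (- l * s) * \<bar>f s\<bar>) \<partial>I01) \<le> (\<integral>\<^sup>+ s. ennreal \<bar>f s\<bar> \<partial>I01)"
    using assms by (intro nn_integral_mono ennreal_leI) (auto intro!: mult_left_le_one_le)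
  ultimately show ?thesis
    using one by (simp add: exp_dual_bound_def)
next
  case (conjugate r)
  define q where "q = r / (r - 1)"
  have "q > 1" "1 / r + 1 / q = 1"
    using conjugate_exponent[OF \<open>r > 1\<close>] by (simp_all add: q_def)
  then have "(\<integral>\<^sup>+ s. ennreal (exp (- l * s) * \<bar>f s\<bar>) \<partial>I01) \<le> ennreal ((q * l) powr (- 1 / q))"
    using conjugate assms Lp_norm_ereal_le_iff[of r 1 f, folded one_ereal_def]
    by (intro nn_integral_exp_abs_le_Holder) auto
  moreover have "exp_dual_bound p l = (q * l) powr (- 1 / q)"
    unfolding exp_dual_bound_def q_def Let_def using conjugate by simp
  ultimately show ?thesis
    by simp
qed

lemma nn_integral_abs_le_one:
  assumes "1 \<le> p" and [measurable]: "f \<in> borel_measurable I01" and "Lp_norm p f \<le> 1"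
  shows "(\<integral>\<^sup>+ s. ennreal \<bar>f s\<bar> \<partial>I01) \<le> 1"
  using assms(1)
proof (cases rule: ereal_ge_one_cases)
  case infinity
  then have "AE s in I01. \<bar>f s\<bar> \<le> 1"
    using assms Lp_norm_infinity_le_iff[of f 1, folded one_ereal_def] by simp
  then have "(\<integral>\<^sup>+ s. ennreal \<bar>f s\<bar> \<partial>I01) \<le> (\<integral>\<^sup>+ s. 1 \<partial>I01)"
    by (intro nn_integral_mono_AE) (auto elim!: eventually_mono)
  then show ?thesis
    using emeasure_I01_space by simp
next
  case one
  then show ?thesis
    using assms Lp_norm_ereal_le_iff[of 1 1 f, folded one_ereal_def] by simp
next
  case (conjugate r)
  have "(\<integral>\<^sup>+ s. ennreal (\<bar>f s\<bar> powr r) \<partial>I01) \<le> 1"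
    using conjugate assms Lp_norm_ereal_le_iff[of r 1 f, folded one_ereal_def] by simp
  then have "(\<integral>\<^sup>+ s. ennreal (1 * \<bar>f s\<bar>) \<partial>I01) \<le> ennreal 1"
    using conjugate conjugate_exponent[OF \<open>r > 1\<close>] emeasure_I01_space
    by (intro Holder_inequality_nn_integral[of r "r / (r - 1)"]) simp_all
  then show ?thesis
    by simp
qed

lemma S_op_altdef: "S_op l f t = exp (l * t) * (\<integral>s. exp (- l * s) * f s \<partial>I01)"
proof -
  have "S_op l f t = (\<integral>s. exp (l * t) * (exp (- l * s) * f s) \<partial>I01)"
    unfolding S_op_def
    by (intro Bochner_Integration.integral_cong refl) (simp add: exp_add[symmetric] algebra_simps)
  then show ?thesis
    by simp
qed

lemma measurable_S_op [measurable]: "S_op l f \<in> borel_measurable I01"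
  by (simp add: S_op_altdef[abs_def])

lemma measurable_T_op [measurable]:
  assumes [measurable]: "f \<in> borel_measurable I01"
  shows "T_op l f \<in> borel_measurable I01"
proof -
  interpret finite_measure I01
    by (rule finite_measure_lebesgue_on) auto
  have [measurable]: "fst \<in> borel_measurable (I01 \<Otimes>\<^sub>M I01)" "snd \<in> borel_measurable (I01 \<Otimes>\<^sub>M I01)"
    using measurable_compose[OF measurable_fst measurable_id_I01]
      measurable_compose[OF measurable_snd measurable_id_I01] by simp_all
  have [measurable]: "Measurable.pred (I01 \<Otimes>\<^sub>M I01) (\<lambda>x. snd x \<in> {..<fst x})"
    by (simp only: lessThan_iff) measurable
  show ?thesis
    unfolding T_op_def by (rule borel_measurable_lebesgue_integral) measurable
qed

lemma abs_integral_le_nn_integral: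
  fixes g :: "'a \<Rightarrow> real"
  assumes "(\<integral>\<^sup>+ s. ennreal \<bar>g s\<bar> \<partial>M) \<le> ennreal B" "0 \<le> B"
  shows "\<bar>integral\<^sup>L M g\<bar> \<le> B"
proof (cases "integrable M g")
  case True
  then have "ennreal \<bar>integral\<^sup>L M g\<bar> \<le> ennreal B"
    using integral_norm_bound_ennreal[of M g] assms(1) by simp
  then show ?thesis
    using assms(2) by simp
qed (use assms(2) in \<open>simp add: not_integrable_integral_eq\<close>)

lemma abs_integral_exp_kernel_le:
  assumes [measurable]: "f \<in> borel_measurable I01" and K: "0 \<le> K"
    and f_weighted: "(\<integral>\<^sup>+ s. ennreal (exp (- l * s) * \<bar>f s\<bar>) \<partial>I01) \<le> ennreal K"
    and kernel: "\<And>s. \<bar>g s\<bar> \<le> exp (l * t) * (exp (- l * s) * \<bar>f s\<bar>)"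
  shows "\<bar>integral\<^sup>L I01 g\<bar> \<le> K * exp (l * t)"
proof (rule abs_integral_le_nn_integral)
  have "(\<integral>\<^sup>+ s. ennreal \<bar>g s\<bar> \<partial>I01)
      \<le> (\<integral>\<^sup>+ s. ennreal (exp (l * t)) * ennreal (exp (- l * s) * \<bar>f s\<bar>) \<partial>I01)"
    using kernel by (intro nn_integral_mono) (simp flip: ennreal_mult add: ennreal_leI)
  also have "\<dots> = ennreal (exp (l * t)) * (\<integral>\<^sup>+ s. ennreal (exp (- l * s) * \<bar>f s\<bar>) \<partial>I01)"
    by (intro nn_integral_cmult) measurable
  also have "\<dots> \<le> ennreal (exp (l * t)) * ennreal K"
    using f_weighted by (intro mult_left_mono) auto
  finally show "(\<integral>\<^sup>+ s. ennreal \<bar>g s\<bar> \<partial>I01) \<le> ennreal (K * exp (l * t))"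
    using K by (simp add: ennreal_mult mult.commute)
qed (use K in simp)

lemma exp_kernel_split: "exp ((l::real) * (t - s)) = exp (l * t) * exp (- l * s)"
  by (simp add: algebra_simps flip: exp_add)

lemma abs_T_op_le:
  assumes "f \<in> borel_measurable I01" "0 \<le> K"
    and "(\<integral>\<^sup>+ s. ennreal (exp (- l * s) * \<bar>f s\<bar>) \<partial>I01) \<le> ennreal K"
  shows "\<bar>T_op l f t\<bar> \<le> K * exp (l * t)"
  unfolding T_op_def using assms
  by (intro abs_integral_exp_kernel_le) (auto simp: exp_kernel_split abs_mult indicator_def)

lemma abs_S_op_le:
  assumes "f \<in> borel_measurable I01" "0 \<le> K"
    and "(\<integral>\<^sup>+ s. ennreal (exp (- l * s) * \<bar>f s\<bar>) \<partial>I01) \<le> ennreal K"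
  shows "\<bar>S_op l f t\<bar> \<le> K * exp (l * t)"
  unfolding S_op_def using assms
  by (intro abs_integral_exp_kernel_le) (auto simp: exp_kernel_split abs_mult)

lemma abs_S_op_minus_T_op_le:
  assumes [measurable]: "f \<in> borel_measurable I01" and "0 \<le> l" "0 \<le> B"
    and f_L1: "(\<integral>\<^sup>+ s. ennreal \<bar>f s\<bar> \<partial>I01) \<le> ennreal B"
  shows "\<bar>S_op l f t - T_op l f t\<bar> \<le> B"
proof -
  have "integrable I01 f"
    using f_L1 by (intro integrableI_bounded) (auto simp: top_unique le_less_trans[OF _ ennreal_less_top])
  then have dominated: "integrable I01 (\<lambda>s. exp (l * t) * f s)"
    by simp
  have "integrable I01 (\<lambda>s. exp (l * (t - s)) * f s)"
    using \<open>0 \<le> l\<close>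
    by (intro Bochner_Integration.integrable_bound[OF dominated] AE_I2)
       (auto simp: abs_mult right_diff_distrib intro!: mult_right_mono)
  moreover have "integrable I01 (\<lambda>s. indicator {..<t} s * exp (l * (t - s)) * f s)"
    using \<open>0 \<le> l\<close>
    by (intro Bochner_Integration.integrable_bound[OF dominated] AE_I2)
       (auto simp: abs_mult indicator_def right_diff_distrib intro!: mult_right_mono)
  ultimately have "S_op l f t - T_op l f t
      = (\<integral>s. exp (l * (t - s)) * f s - indicator {..<t} s * exp (l * (t - s)) * f s \<partial>I01)"
    unfolding S_op_def T_op_def by simp
  also have "\<bar>\<dots>\<bar> \<le> B"
  proof (rule abs_integral_le_nn_integral[OF order_trans[OF nn_integral_mono f_L1] \<open>0 \<le> B\<close>])
    fix s
    have "\<bar>exp (l * (t - s)) * f s - indicator {..<t} s * exp (l * (t - s)) * f s\<bar> \<le> \<bar>f s\<bar>"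
    proof (cases "s < t")
      case False
      then have "exp (l * (t - s)) \<le> 1"
        using \<open>0 \<le> l\<close> by (simp add: mult_nonneg_nonpos)
      then show ?thesis
        using False by (simp add: abs_mult mult_left_le_one_le)
    qed simp
    then show "ennreal \<bar>exp (l * (t - s)) * f s - indicator {..<t} s * exp (l * (t - s)) * f s\<bar>
        \<le> ennreal \<bar>f s\<bar>"
      by (rule ennreal_leI)
  qed
  finally show ?thesis .
qed

lemma op_norm_le_exp_growth:
  assumes "1 \<le> p" "l > 0" "0 \<le> K"
    and growth: "\<And>f. f \<in> borel_measurable I01 \<Longrightarrow> Lp_norm p f \<le> 1 \<Longrightarrow>
                   A f \<in> borel_measurable I01 \<and> (\<forall>t. \<bar>A f t\<bar> \<le> K * exp (l * t))"
  shows "op_norm p A \<le> ereal (K * exp_Lp_bound p l)"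
proof (rule op_norm_le)
  fix f assume "f \<in> borel_measurable I01" "Lp_norm p f \<le> 1"
  with assms have "Lp_norm p (A f) \<le> Lp_norm p (\<lambda>t. K * exp (l * t))"
    by (intro Lp_norm_mono) auto
  also have "\<dots> \<le> ereal (K * exp_Lp_bound p l)"
    using assms by (intro Lp_norm_exp_le)
  finally show "Lp_norm p (A f) \<le> ereal (K * exp_Lp_bound p l)" .
qed

lemma op_norm_T_op_le:
  assumes "1 \<le> p" "l > 0"
  shows "op_norm p (T_op l) \<le> ereal (C_const p * exp l / l)"
proof -
  have "op_norm p (T_op l) \<le> ereal (exp_dual_bound p l * exp_Lp_bound p l)"
    using assms exp_dual_bound_pos[OF assms]
    by (intro op_norm_le_exp_growth) (auto intro!: abs_T_op_le nn_integral_exp_abs_le_exp_dual_bound)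
  then show ?thesis
    using exp_dual_bound_mult_exp_Lp_bound[OF assms] by simp
qed

lemma op_norm_S_op_le:
  assumes "1 \<le> p" "l > 0"
  shows "op_norm p (S_op l) \<le> ereal (C_const p * exp l / l)"
proof -
  have "op_norm p (S_op l) \<le> ereal (exp_dual_bound p l * exp_Lp_bound p l)"
    using assms exp_dual_bound_pos[OF assms]
    by (intro op_norm_le_exp_growth) (auto intro!: abs_S_op_le nn_integral_exp_abs_le_exp_dual_bound)
  then show ?thesis
    using exp_dual_bound_mult_exp_Lp_bound[OF assms] by simp
qed

lemma op_norm_S_op_minus_T_op_le:
  assumes "1 \<le> p" "0 \<le> l"
  shows "op_norm p (\<lambda>f t. S_op l f t - T_op l f t) \<le> 1"
proof (rule op_norm_le)
  fix f assume f: "f \<in> borel_measurable I01" "Lp_norm p f \<le> 1"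
  then have "Lp_norm p (\<lambda>t. S_op l f t - T_op l f t) \<le> Lp_norm p (\<lambda>_. 1)"
    using assms nn_integral_abs_le_one[OF assms(1) f]
    by (intro Lp_norm_mono abs_S_op_minus_T_op_le) auto
  then show "Lp_norm p (\<lambda>t. S_op l f t - T_op l f t) \<le> 1"
    unfolding one_ereal_def using Lp_norm_const[OF assms(1), of 1] by simp
qed

section \<open>Lower bounds from exponential test functions\<close>

lemma T_op_exp:
  assumes "0 < t" "t \<le> 1" "l + \<nu> > 0"
  shows "T_op l (\<lambda>s. c * exp (- \<nu> * s)) t
           = c * exp (l * t) * ((1 - exp (- (l + \<nu>) * t)) / (l + \<nu>))"
proof -
  have "T_op l (\<lambda>s. c * exp (- \<nu> * s)) t
      = (\<integral>s. c * exp (l * t) * (indicator {0<..<t} s * exp (- (l + \<nu>) * s)) \<partial>I01)"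
    unfolding T_op_def
    by (intro Bochner_Integration.integral_cong refl)
       (auto simp: indicator_def exp_kernel_split algebra_simps simp flip: exp_add)
  then show ?thesis
    using assms by (simp only: integral_mult_right_zero integral_indicator_exp_neg)
qed

lemma S_op_exp:
  assumes "l + \<nu> > 0"
  shows "S_op l (\<lambda>s. c * exp (- \<nu> * s)) t = c * exp (l * t) * ((1 - exp (- (l + \<nu>))) / (l + \<nu>))"
proof -
  have "S_op l (\<lambda>s. c * exp (- \<nu> * s)) t
      = (\<integral>s. c * exp (l * t) * (indicator {0<..<1} s * exp (- (l + \<nu>) * s)) \<partial>I01)"
    unfolding S_op_def
    by (intro Bochner_Integration.integral_cong refl)
       (auto simp: indicator_def exp_kernel_split algebra_simps simp flip: exp_add)
  then show ?thesis
    using assms integral_indicator_exp_neg[of 1 "l + \<nu>"] by (simp only: integral_mult_right_zero) simp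
qed

lemma T_op_S_op_exp_ge:
  assumes t: "1/2 < t" "t < 1" and "l + \<nu> > 0" "0 \<le> c"
    and a: "a \<le> c * ((1 - exp (- (l + \<nu>) / 2)) / (l + \<nu>))"
  shows "a * exp (l * t) \<le> T_op l (\<lambda>s. c * exp (- \<nu> * s)) t"
    and "a * exp (l * t) \<le> S_op l (\<lambda>s. c * exp (- \<nu> * s)) t"
proof -
  have a_le: "a \<le> c * ((1 - exp (- (l + \<nu>) * s)) / (l + \<nu>))" if "1/2 \<le> s" for s
  proof -
    have "exp (- (l + \<nu>) * s) \<le> exp (- (l + \<nu>) / 2)"
      using assms that by (simp add: mult_left_mono)
    then have "c * ((1 - exp (- (l + \<nu>) / 2)) / (l + \<nu>)) \<le> c * ((1 - exp (- (l + \<nu>) * s)) / (l + \<nu>))"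
      using assms by (intro mult_left_mono divide_right_mono) auto
    then show ?thesis
      using a by (rule order_trans[rotated])
  qed
  have T: "T_op l (\<lambda>s. c * exp (- \<nu> * s)) t = c * ((1 - exp (- (l + \<nu>) * t)) / (l + \<nu>)) * exp (l * t)"
    using assms by (subst T_op_exp) auto
  have S: "S_op l (\<lambda>s. c * exp (- \<nu> * s)) t = c * ((1 - exp (- (l + \<nu>) * 1)) / (l + \<nu>)) * exp (l * t)"
    using assms by (subst S_op_exp) auto
  show "a * exp (l * t) \<le> T_op l (\<lambda>s. c * exp (- \<nu> * s)) t"
    unfolding T using t a_le[of t] by (intro mult_right_mono) auto
  show "a * exp (l * t) \<le> S_op l (\<lambda>s. c * exp (- \<nu> * s)) t"
    unfolding S using a_le[of 1] by (intro mult_right_mono) auto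
qed

lemma op_norms_ge_test_function:
  assumes "1 \<le> p" "l > 0" "0 \<le> \<nu>" "0 \<le> c" and test: "Lp_norm p (\<lambda>s. c * exp (- \<nu> * s)) \<le> 1"
    and a: "0 \<le> a" "a \<le> c * ((1 - exp (- (l + \<nu>) / 2)) / (l + \<nu>))"
  shows "Lp_norm p (\<lambda>t. indicator {1/2<..<1} t * (a * exp (l * t)))
           \<le> min (op_norm p (T_op l)) (op_norm p (S_op l))"
proof -
  define f where "f = (\<lambda>s. c * exp (- \<nu> * s))"
  have [measurable]: "f \<in> borel_measurable I01"
    unfolding f_def by measurable
  have "\<bar>indicator {1/2<..<1} t * (a * exp (l * t))\<bar> \<le> \<bar>T_op l f t\<bar>"
    and "\<bar>indicator {1/2<..<1} t * (a * exp (l * t))\<bar> \<le> \<bar>S_op l f t\<bar>" for t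
    using assms T_op_S_op_exp_ge[of t l \<nu> c a]
    by (auto simp: indicator_def f_def intro: order_trans[OF _ abs_ge_self])
  then have "Lp_norm p (\<lambda>t. indicator {1/2<..<1} t * (a * exp (l * t))) \<le> Lp_norm p (T_op l f)"
    and "Lp_norm p (\<lambda>t. indicator {1/2<..<1} t * (a * exp (l * t))) \<le> Lp_norm p (S_op l f)"
    using assms by (auto intro!: Lp_norm_mono)
  moreover have "Lp_norm p (T_op l f) \<le> op_norm p (T_op l)" "Lp_norm p (S_op l f) \<le> op_norm p (S_op l)"
    using test by (auto intro!: Lp_norm_le_op_norm simp: f_def)
  ultimately show ?thesis
    by (auto intro: order_trans)
qed

lemma op_norms_ge_infinity:
  assumes "l \<ge> 2"
  shows "ereal (exp l / l * ((1 - exp (- l / 2)) * exp (- 1 / l)))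
           \<le> min (op_norm \<infinity> (T_op l)) (op_norm \<infinity> (S_op l))"
proof -
  define a where "a = (1 - exp (- l / 2)) / l"
  \<comment> \<open>l (1 - b) \<rightarrow> 0, so e^(l b) is asymptotic to the essential supremum e^l\<close>
  define b where "b = 1 - 1 / l\<^sup>2"
  have a: "0 \<le> a"
    using assms by (simp add: a_def)
  have b: "1/2 \<le> b" "b < 1"
  proof -
    have "1 / l\<^sup>2 \<le> 1 / 2\<^sup>2"
      using assms by (intro divide_left_mono power_mono) auto
    then show "1/2 \<le> b"
      by (simp add: b_def)
    show "b < 1"
      using assms by (simp add: b_def)
  qed
  have "ereal (a * exp (l * b)) \<le> Lp_norm \<infinity> (\<lambda>t. indicator {1/2<..<1} t * (a * exp (l * t)))"
    using assms a b by (intro Lp_norm_infinity_ge[of b]) (auto intro!: mult_left_mono)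
  also have "\<dots> \<le> min (op_norm \<infinity> (T_op l)) (op_norm \<infinity> (S_op l))"
    using assms a Lp_norm_const[of \<infinity> 1]
    by (intro op_norms_ge_test_function[where \<nu> = 0 and c = 1]) (auto simp: a_def)
  also have "a * exp (l * b) = exp l / l * ((1 - exp (- l / 2)) * exp (- 1 / l))"
  proof -
    have "l * b = l + - 1 / l"
      using assms by (simp add: b_def field_simps power2_eq_square)
    then have "exp (l * b) = exp l * exp (- 1 / l)"
      by (simp only: exp_add)
    then show ?thesis
      by (simp add: a_def)
  qed
  finally show ?thesis .
qed

lemma Lp_norm_exp_test_function_le_one:
  assumes "r \<ge> 1" "\<nu> > 0" "0 \<le> c" "c powr r \<le> r * \<nu>"
  shows "Lp_norm (ereal r) (\<lambda>s. c * exp (- \<nu> * s)) \<le> 1"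
proof -
  have "(\<integral>\<^sup>+ s. ennreal (\<bar>c * exp (- \<nu> * s)\<bar> powr r) \<partial>I01)
      = (\<integral>\<^sup>+ s. ennreal (c powr r) * ennreal (exp (- (r * \<nu>) * s)) \<partial>I01)"
    using assms powr_mult_exp[of c "- \<nu>" _ r] by (intro nn_integral_cong) (simp add: ennreal_mult)
  also have "\<dots> = ennreal (c powr r) * ennreal ((1 - exp (- (r * \<nu>))) / (r * \<nu>))"
    using assms nn_integral_exp_neg_I01[of "r * \<nu>"] by (simp add: nn_integral_cmult)
  also have "\<dots> = ennreal (c powr r * ((1 - exp (- (r * \<nu>))) / (r * \<nu>)))"
    using assms by (intro ennreal_mult[symmetric]) auto
  also have "\<dots> \<le> ennreal (1 powr r)"
  proof (intro ennreal_leI)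
    have "c powr r * ((1 - exp (- (r * \<nu>))) / (r * \<nu>)) \<le> (r * \<nu>) * ((1 - exp (- (r * \<nu>))) / (r * \<nu>))"
      using assms by (intro mult_right_mono) auto
    moreover have "(r * \<nu>) * ((1 - exp (- (r * \<nu>))) / (r * \<nu>)) = 1 - exp (- (r * \<nu>))"
      using assms by simp
    ultimately show "c powr r * ((1 - exp (- (r * \<nu>))) / (r * \<nu>)) \<le> 1 powr r"
      using exp_gt_zero[of "- (r * \<nu>)"] unfolding powr_one_eq_one by linarith
  qed
  finally show ?thesis
    using assms Lp_norm_ereal_le_iff[of r 1, folded one_ereal_def] by simp
qed

lemma Lp_norm_indicator_exp_tail:
  assumes "r \<ge> 1" "l > 0" "0 \<le> a"
  shows "Lp_norm (ereal r) (\<lambda>t. indicator {1/2<..<1} t * (a * exp (l * t)))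
           = ereal (a * ((exp (r * l) - exp (r * l / 2)) / (r * l)) powr (1 / r))"
proof -
  define Y where "Y = (exp (r * l) - exp (r * l / 2)) / (r * l)"
  have Y: "0 \<le> Y"
    using assms by (simp add: Y_def)
  have "(\<integral>\<^sup>+ t. ennreal (\<bar>indicator {1/2<..<1} t * (a * exp (l * t))\<bar> powr r) \<partial>I01)
      = (\<integral>\<^sup>+ t. ennreal (a powr r) * ennreal (indicator {1/2<..<1} t * exp ((r * l) * t)) \<partial>I01)"
    using assms by (intro nn_integral_cong) (simp add: indicator_def powr_mult_exp ennreal_mult)
  also have "\<dots> = ennreal (a powr r) * ennreal Y"
    using assms nn_integral_indicator_exp[of "1/2" 1 "r * l"]
    by (simp add: nn_integral_cmult Y_def mult_ac)
  also have "\<dots> = ennreal (a powr r * Y)"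
    using assms Y by (simp add: ennreal_mult)
  finally have "Lp_norm (ereal r) (\<lambda>t. indicator {1/2<..<1} t * (a * exp (l * t))) = ereal (a * Y powr (1 / r))"
    using assms Y by (simp add: Lp_norm_ereal_eq powr_mult powr_powr)
  then show ?thesis
    unfolding Y_def .
qed

lemma op_norms_ge_finite:
  assumes "r \<ge> 1" "l > 0" "\<nu> > 0" "0 \<le> c" "c powr r \<le> r * \<nu>"
  shows "ereal (c * ((1 - exp (- (l + \<nu>) / 2)) / (l + \<nu>)) * ((exp (r * l) - exp (r * l / 2)) / (r * l)) powr (1 / r))
           \<le> min (op_norm (ereal r) (T_op l)) (op_norm (ereal r) (S_op l))"
proof -
  define a where "a = c * ((1 - exp (- (l + \<nu>) / 2)) / (l + \<nu>))"
  have "0 \<le> a"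
    using assms by (simp add: a_def)
  then have "ereal (a * ((exp (r * l) - exp (r * l / 2)) / (r * l)) powr (1 / r))
      = Lp_norm (ereal r) (\<lambda>t. indicator {1/2<..<1} t * (a * exp (l * t)))"
    using assms by (simp add: Lp_norm_indicator_exp_tail)
  also have "\<dots> \<le> min (op_norm (ereal r) (T_op l)) (op_norm (ereal r) (S_op l))"
    using assms \<open>0 \<le> a\<close> Lp_norm_exp_test_function_le_one[of r \<nu> c]
    by (intro op_norms_ge_test_function) (auto simp: a_def)
  finally show ?thesis
    unfolding a_def .
qed

lemma op_norms_ge_one:
  assumes "l > 0"
  shows "ereal (exp l / l * (l\<^sup>2 * ((1 - exp (- (l + l\<^sup>2) / 2)) / (l + l\<^sup>2)) * (1 - exp (- l / 2))))
           \<le> min (op_norm 1 (T_op l)) (op_norm 1 (S_op l))"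
proof -
  have "ereal (l\<^sup>2 * ((1 - exp (- (l + l\<^sup>2) / 2)) / (l + l\<^sup>2))
               * ((exp (1 * l) - exp (1 * l / 2)) / (1 * l)) powr (1 / 1))
      \<le> min (op_norm 1 (T_op l)) (op_norm 1 (S_op l))"
    using assms by (intro op_norms_ge_finite[of 1, folded one_ereal_def]) auto
  moreover have "exp l - exp (l / 2) = exp l * (1 - exp (- l / 2))"
    by (simp add: algebra_simps flip: exp_add)
  ultimately show ?thesis
    using assms by (simp add: field_simps)
qed

lemma op_norms_ge_conjugate:
  assumes r: "r > 1" and l: "l > 0"
  shows "ereal (C_const (ereal r) * exp l / l
                * ((1 - exp (- (r / (r - 1) * l) / 2)) * (1 - exp (- (r * l) / 2)) powr (1 / r)))
           \<le> min (op_norm (ereal r) (T_op l)) (op_norm (ereal r) (S_op l))"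
proof -
  define q where "q = r / (r - 1)"
  have q: "q > 1" and rq: "1 / r + 1 / q = 1"
    using conjugate_exponent[OF r] by (simp_all add: q_def)
  define c where "c = (q * l) powr (1 / r)"
  define \<nu> where "\<nu> = l / (r - 1)"
  have l\<nu>: "l + \<nu> = q * l" and r\<nu>: "r * \<nu> = q * l"
    using r by (simp_all add: \<nu>_def q_def field_simps)
  have cK: "c / (q * l) = (q * l) powr (- 1 / q)"
  proof -
    have "c / (q * l) = (q * l) powr (1 / r - 1)"
      using q l by (simp add: c_def powr_diff)
    also have "1 / r - 1 = - 1 / q"
      using rq by (simp add: field_simps)
    finally show ?thesis .
  qed
  have "exp_dual_bound (ereal r) l = (q * l) powr (- 1 / q)"
    unfolding exp_dual_bound_def q_def Let_def using r by simp
  then have a: "c * ((1 - exp (- (l + \<nu>) / 2)) / (l + \<nu>)) = exp_dual_bound (ereal r) l * (1 - exp (- (q * l) / 2))"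
    unfolding l\<nu> cK[symmetric] by simp
  have base: "(exp (r * l) - exp (r * l / 2)) / (r * l) = exp (r * l) / (r * l) * (1 - exp (- (r * l) / 2))"
    using r l by (simp add: field_simps flip: exp_add)
  have Y: "((exp (r * l) - exp (r * l / 2)) / (r * l)) powr (1 / r)
      = exp_Lp_bound (ereal r) l * (1 - exp (- (r * l) / 2)) powr (1 / r)"
    unfolding base using r l by (subst powr_mult) (auto simp: exp_Lp_bound_def)
  have le: "ereal (c * ((1 - exp (- (l + \<nu>) / 2)) / (l + \<nu>)) * ((exp (r * l) - exp (r * l / 2)) / (r * l)) powr (1 / r))
      \<le> min (op_norm (ereal r) (T_op l)) (op_norm (ereal r) (S_op l))"
    using r l q r\<nu> by (intro op_norms_ge_finite) (auto simp: c_def \<nu>_def powr_powr)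
  have KE: "exp_dual_bound (ereal r) l * exp_Lp_bound (ereal r) l = C_const (ereal r) * exp l / l"
    using r l by (intro exp_dual_bound_mult_exp_Lp_bound) auto
  have eq: "exp_dual_bound (ereal r) l * (1 - exp (- (q * l) / 2))
        * (exp_Lp_bound (ereal r) l * (1 - exp (- (r * l) / 2)) powr (1 / r))
      = C_const (ereal r) * exp l / l * ((1 - exp (- (q * l) / 2)) * (1 - exp (- (r * l) / 2)) powr (1 / r))"
    unfolding KE[symmetric] by (simp only: ac_simps)
  from le show ?thesis
    unfolding a Y eq q_def[symmetric] .
qed

lemma op_norms_lower_bound:
  assumes "1 \<le> p"
  obtains \<rho> where "(\<rho> \<longlongrightarrow> 1) at_top"
    "\<forall>\<^sub>F l in at_top. ereal (C_const p * exp l / l * \<rho> l) \<le> min (op_norm p (T_op l)) (op_norm p (S_op l))"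
  using assms
proof (cases rule: ereal_ge_one_cases)
  case infinity
  have "((\<lambda>l::real. (1 - exp (- l / 2)) * exp (- 1 / l)) \<longlongrightarrow> 1) at_top"
    by real_asymp
  moreover have "\<forall>\<^sub>F l in at_top. ereal (C_const p * exp l / l * ((1 - exp (- l / 2)) * exp (- 1 / l)))
      \<le> min (op_norm p (T_op l)) (op_norm p (S_op l))"
    using eventually_ge_at_top[of 2] by eventually_elim (use infinity op_norms_ge_infinity in \<open>simp add: C_const_def\<close>)
  ultimately show ?thesis
    by (rule that)
next
  case one
  have "((\<lambda>l::real. l\<^sup>2 * ((1 - exp (- (l + l\<^sup>2) / 2)) / (l + l\<^sup>2)) * (1 - exp (- l / 2))) \<longlongrightarrow> 1) at_top"
    by real_asymp
  moreover have "\<forall>\<^sub>F l in at_top.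
      ereal (C_const p * exp l / l * (l\<^sup>2 * ((1 - exp (- (l + l\<^sup>2) / 2)) / (l + l\<^sup>2)) * (1 - exp (- l / 2))))
      \<le> min (op_norm p (T_op l)) (op_norm p (S_op l))"
    using eventually_gt_at_top[of 0] by eventually_elim (use one op_norms_ge_one in \<open>simp add: C_const_def\<close>)
  ultimately show ?thesis
    by (rule that)
next
  case (conjugate r)
  define q where "q = r / (r - 1)"
  have "q > 1"
    using conjugate_exponent(1)[OF \<open>r > 1\<close>] by (simp add: q_def)
  then have "((\<lambda>l. (1 - exp (- (q * l) / 2)) * (1 - exp (- (r * l) / 2)) powr (1 / r)) \<longlongrightarrow> 1) at_top"
    using \<open>r > 1\<close> by real_asymp
  moreover have "\<forall>\<^sub>F l in at_top.
      ereal (C_const p * exp l / l * ((1 - exp (- (q * l) / 2)) * (1 - exp (- (r * l) / 2)) powr (1 / r)))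
      \<le> min (op_norm p (T_op l)) (op_norm p (S_op l))"
    using eventually_gt_at_top[of 0]
    by eventually_elim (use conjugate op_norms_ge_conjugate in \<open>simp add: q_def\<close>)
  ultimately show ?thesis
    by (rule that)
qed

lemma C_const_pos:
  assumes "1 \<le> p"
  shows "C_const p > 0"
  using assms by (cases rule: ereal_ge_one_cases) (auto simp: C_const_def)

section \<open>Asymptotics\<close>

lemma real_of_ereal_bounds:
  assumes "ereal a \<le> x" "x \<le> ereal b"
  shows "a \<le> real_of_ereal x" "real_of_ereal x \<le> b"
  using assms by (cases x; simp)+

lemma op_norms_bounds:
  assumes "1 \<le> p"
  obtains \<rho> where "(\<rho> \<longlongrightarrow> 1) at_top"
    "\<forall>\<^sub>F l in at_top.
       real_of_ereal (op_norm p (T_op l)) \<in> {C_const p * exp l / l * \<rho> l..C_const p * exp l / l} \<and>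
       C_const p * exp l / l * \<rho> l \<le> real_of_ereal (op_norm p (S_op l)) \<and>
       real_of_ereal (op_norm p (\<lambda>f t. S_op l f t - T_op l f t)) \<in> {0..1}"
proof -
  obtain \<rho> where \<rho>: "(\<rho> \<longlongrightarrow> 1) at_top" and lower: "\<forall>\<^sub>F l in at_top.
      ereal (C_const p * exp l / l * \<rho> l) \<le> min (op_norm p (T_op l)) (op_norm p (S_op l))"
    using op_norms_lower_bound[OF assms] by blast
  have "\<forall>\<^sub>F l in at_top.
       real_of_ereal (op_norm p (T_op l)) \<in> {C_const p * exp l / l * \<rho> l..C_const p * exp l / l} \<and>
       C_const p * exp l / l * \<rho> l \<le> real_of_ereal (op_norm p (S_op l)) \<and>
       real_of_ereal (op_norm p (\<lambda>f t. S_op l f t - T_op l f t)) \<in> {0..1}"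
    using lower eventually_gt_at_top[of 0]
  proof eventually_elim
    case (elim l)
    have "0 \<le> real_of_ereal (op_norm p (\<lambda>f t. S_op l f t - T_op l f t))
        \<and> real_of_ereal (op_norm p (\<lambda>f t. S_op l f t - T_op l f t)) \<le> 1"
      using op_norm_nonneg[OF assms, of "\<lambda>f t. S_op l f t - T_op l f t"]
        op_norm_S_op_minus_T_op_le[OF assms, of l] elim
      by (cases "op_norm p (\<lambda>f t. S_op l f t - T_op l f t)") auto
    then show ?case
      using elim real_of_ereal_bounds[OF _ op_norm_T_op_le[OF assms, of l]]
        real_of_ereal_bounds[OF _ op_norm_S_op_le[OF assms, of l]]
      by auto
  qed
  with \<rho> show ?thesis
    by (rule that)
qed

lemma tendsto_bounded_divide_at_top:
  fixes z y :: "'a \<Rightarrow> real"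
  assumes "\<forall>\<^sub>F x in F. \<bar>z x\<bar> \<le> B" "filterlim y at_top F"
  shows "((\<lambda>x. z x / y x) \<longlongrightarrow> 0) F"
proof (rule Lim_null_comparison)
  show "\<forall>\<^sub>F x in F. norm (z x / y x) \<le> B / y x"
    using assms(1) filterlim_at_top_dense[THEN iffD1, OF assms(2), rule_format, of 0]
    by eventually_elim (simp add: abs_divide divide_right_mono)
  show "((\<lambda>x. B / y x) \<longlongrightarrow> 0) F"
    by (rule tendsto_divide_0[OF tendsto_const filterlim_at_top_imp_at_infinity[OF assms(2)]])
qed

lemma sandwich_asymptotics:
  fixes x y z U \<rho> :: "'a \<Rightarrow> real"
  assumes \<rho>: "(\<rho> \<longlongrightarrow> 1) F"
    and bounds: "\<forall>\<^sub>F l in F. x l \<in> {U l * \<rho> l..U l} \<and> U l * \<rho> l \<le> y l \<and> z l \<in> {0..1}"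
    and U: "filterlim U at_top F"
  shows "((\<lambda>l. z l / y l) \<longlongrightarrow> 0) F \<and> x \<sim>[F] U"
proof
  have U_equiv: "(\<lambda>l. U l * \<rho> l) \<sim>[F] U"
    using asymp_equiv_mult[OF asymp_equiv_refl asymp_equivI'_const[where f = \<rho> and g = "\<lambda>_. 1" and c = 1]] \<rho>
    by simp
  then have "filterlim (\<lambda>l. U l * \<rho> l) at_top F"
    using U by (rule asymp_equiv_at_top_transfer[OF asymp_equiv_symI])
  then have "filterlim y at_top F"
    by (rule filterlim_at_top_mono) (use bounds in \<open>auto elim: eventually_mono\<close>)
  then show "((\<lambda>l. z l / y l) \<longlongrightarrow> 0) F"
    using bounds by (intro tendsto_bounded_divide_at_top[where B = 1]) (auto elim!: eventually_mono)
  show "x \<sim>[F] U"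
    using bounds by (intro asymp_equiv_sandwich_real[OF U_equiv asymp_equiv_refl]) (auto elim!: eventually_mono)
qed

theorem lemma3p2:
  fixes p :: ereal
  assumes "1 \<le> p"
  shows "((\<lambda>l. real_of_ereal (op_norm p (\<lambda>f t. S_op l f t - T_op l f t))
                 / real_of_ereal (op_norm p (S_op l))) \<longlongrightarrow> 0) at_top \<and>
         (\<lambda>l. real_of_ereal (op_norm p (T_op l))) \<sim>[at_top] (\<lambda>l. C_const p * exp l / l)"
proof -
  obtain \<rho> where "(\<rho> \<longlongrightarrow> 1) at_top"
    and "\<forall>\<^sub>F l in at_top.
       real_of_ereal (op_norm p (T_op l)) \<in> {C_const p * exp l / l * \<rho> l..C_const p * exp l / l} \<and>
       C_const p * exp l / l * \<rho> l \<le> real_of_ereal (op_norm p (S_op l)) \<and>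
       real_of_ereal (op_norm p (\<lambda>f t. S_op l f t - T_op l f t)) \<in> {0..1}"
    using op_norms_bounds[OF assms] .
  moreover have "filterlim (\<lambda>l. C_const p * exp l / l) at_top at_top"
    using C_const_pos[OF assms] by real_asymp
  ultimately show ?thesis
    by (rule sandwich_asymptotics)
qed

end
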